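(* Let $M$ be an algebraic number field of degree $m$ with ring of integers $\mathbb{Z}_M$ and integral basis $(1,\omega_2,\ldots,\omega_m)$. Let $\alpha$ be an algebraic integer over $M$ of degree $n$ over $M$, let $K=M(\alpha)$, and let $0\neq\mu\in\mathbb{Z}_M$. Define the constants $c_{hji}$, $c_{hi}$, $c_2$, $c_5$, $d_{hi}$ as follows: \[ c_{hji}=\tfrac12\left|\alpha^{(hj)}-\alpha^{(hi)}\right|\ (i\ne j),\qquad c_{hi}=\frac{|\mu^{(h)}|}{\prod_{1\le j\le n,\,j\ne i}c_{hji}},\qquad c_5=2c_2\,\overline{|\alpha|},\qquad d_{hi}=c_{hi}\,c_5^{\,n-1}, \] where $c_2$ is the row norm (maximum absolute row sum) of $S^{-1}$, $S$ being the $m\times m$ matrix whose $j$-th row is $(1,\omega_2^{(j)},\ldots,\omega_m^{(j)})$. Fix indices $1\le h\le m$, $1\le i\le n$ and a constant $H>0$. Let $\mathcal{L}\subset\mathbb{R}^{2m+2}$ be the lattice generated by the $2m$ columns of the $(2m+2)\times 2m$ matrix whose first $2m$ rows form the $2m\times 2m$ identity matrix and whose last two rows are \[ \big(H\,\mathrm{Re}(1),\ H\,\mathrm{Re}(\omega_2^{(h)}),\ldots,H\,\mathrm{Re}(\omega_m^{(h)}),\ H\,\mathrm{Re}(\alpha^{(hi)}),\ H\,\mathrm{Re}(\alpha^{(hi)}\omega_2^{(h)}),\ldots,H\,\mathrm{Re}(\alpha^{(hi)}\omega_m^{(h)})\big), \] \[ \big(H\,\mathrm{Im}(1),\ H\,\mathrm{Im}(\omega_2^{(h)}),\ldots,H\,\mathrm{Im}(\omega_m^{(h)}),\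 H\,\mathrm{Im}(\alpha^{(hi)}),\ H\,\mathrm{Im}(\alpha^{(hi)}\omega_2^{(h)}),\ldots,H\,\mathrm{Im}(\alpha^{(hi)}\omega_m^{(h)})\big) \] (so the first entries of these two rows are $H$ and $0$). Let $b_1$ be the first vector of an LLL-reduced basis of $\mathcal{L}$. Assume that $x_1,\ldots,x_m,y_1,\ldots,y_m$ are integers, not all zero, with $A=\max(\max_k|x_k|,\max_k|y_k|)$, such that \[ \Big|x_1+\omega_2^{(h)}x_2+\cdots+\omega_m^{(h)}x_m-\alpha^{(hi)}y_1-\alpha^{(hi)}\omega_2^{(h)}y_2-\cdots-\alpha^{(hi)}\omega_m^{(h)}y_m\Big|\le d_{hi}\,A^{1-n}. \] If $A\le A_0$ for some constant $A_0>0$ and \[ |b_1|\ge\sqrt{(2m+1)\,2^{2m-1}}\cdot A_0, \] then \[ A\le\left(\frac{d_{hi}\,H}{A_0}\right)^{\frac{1}{n-1}}. \]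
   Context: Let $\sigma_1,\ldots,\sigma_m$ be the embeddings of $M$ into $\mathbb{C}$; for $\gamma\in M$ write $\gamma^{(j)}=\sigma_j(\gamma)$. Let $f(x)$ be the monic relative defining polynomial of $\alpha$ over $M$, and for $j=1,\ldots,m$ let $\alpha^{(j1)},\ldots,\alpha^{(jn)}$ be the roots of the polynomial obtained by applying $\sigma_j$ to the coefficients of $f$. The size $\overline{|\alpha|}$ is $\max_{j,k}|\alpha^{(jk)}|$. $|\cdot|$ on vectors is the Euclidean norm. An LLL-reduced basis is meant in the sense of Lenstra–Lenstra–Lovász (with the standard parameter $3/4$, as extended by Pohst), so that its first vector satisfies $|b_1|^2\le 2^{2m-1}|v|^2$ for every nonzero $v\in\mathcal{L}$ (the lattice having rank $2m$). *)

theory Defs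
  imports "HOL-Analysis.Analysis" "HOL-Computational_Algebra.Polynomial"
begin

definition subfield_C :: "complex set \<Rightarrow> bool" where
  "subfield_C M \<longleftrightarrow> 0 \<in> M \<and> 1 \<in> M \<and>
     (\<forall>x\<in>M. \<forall>y\<in>M. x + y \<in> M \<and> x - y \<in> M \<and> x * y \<in> M) \<and>
     (\<forall>x\<in>M. inverse x \<in> M)"

definition Q_basis :: "complex set \<Rightarrow> nat \<Rightarrow> (nat \<Rightarrow> complex) \<Rightarrow> bool" where
  "Q_basis M m \<omega> \<longleftrightarrow> (\<forall>k\<in>{1..m}. \<omega> k \<in> M) \<and>
     (\<forall>z\<in>M. \<exists>!c::nat \<Rightarrow> rat. (\<forall>k. k \<notin> {1..m} \<longrightarrow> c k = 0) \<and>
                 z = (\<Sum>k=1..m. of_rat (c k) * \<omega> k))"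

definition integral_basis :: "complex set \<Rightarrow> nat \<Rightarrow> (nat \<Rightarrow> complex) \<Rightarrow> bool" where
  "integral_basis M m \<omega> \<longleftrightarrow> (\<forall>k\<in>{1..m}. \<omega> k \<in> M \<and> algebraic_int (\<omega> k)) \<and>
     (\<forall>z\<in>M. algebraic_int z \<longrightarrow>
        (\<exists>!c::nat \<Rightarrow> int. (\<forall>k. k \<notin> {1..m} \<longrightarrow> c k = 0) \<and>
                 z = (\<Sum>k=1..m. of_int (c k) * \<omega> k)))"

text \<open>sigma 1, ..., sigma m are pairwise distinct field embeddings of M into C
  (as m is the degree, these are all of them).\<close>
definition embeddings :: "complex set \<Rightarrow> nat \<Rightarrow> (nat \<Rightarrow> complex \<Rightarrow> complex) \<Rightarrow> bool" where
  "embeddings M m \<sigma> \<longleftrightarrow>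
     (\<forall>j\<in>{1..m}. \<sigma> j 1 = 1 \<and>
        (\<forall>x\<in>M. \<forall>y\<in>M. \<sigma> j (x + y) = \<sigma> j x + \<sigma> j y \<and> \<sigma> j (x * y) = \<sigma> j x * \<sigma> j y)) \<and>
     (\<forall>j\<in>{1..m}. \<forall>j'\<in>{1..m}. j \<noteq> j' \<longrightarrow> (\<exists>x\<in>M. \<sigma> j x \<noteq> \<sigma> j' x))"

definition rel_min_poly :: "complex set \<Rightarrow> complex \<Rightarrow> complex poly \<Rightarrow> nat \<Rightarrow> bool" where
  "rel_min_poly M \<alpha> f n \<longleftrightarrow> lead_coeff f = 1 \<and> (\<forall>k. coeff f k \<in> M) \<and> poly f \<alpha> = 0 \<and>
     degree f = n \<and>
     (\<forall>g. g \<noteq> 0 \<and> (\<forall>k. coeff g k \<in> M) \<and> poly g \<alpha> = 0 \<longrightarrow> n \<le> degree g)"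

text \<open>a j 1, ..., a j n are the roots of sigma_j(f), i.e. the relative conjugates alpha^(jk).\<close>
definition conjugates :: "nat \<Rightarrow> nat \<Rightarrow> (nat \<Rightarrow> complex \<Rightarrow> complex) \<Rightarrow> complex poly
     \<Rightarrow> (nat \<Rightarrow> nat \<Rightarrow> complex) \<Rightarrow> bool" where
  "conjugates m n \<sigma> f a \<longleftrightarrow>
     (\<forall>j\<in>{1..m}. map_poly (\<sigma> j) f = (\<Prod>k=1..n. [:- a j k, 1:]))"

definition alpha_size :: "nat \<Rightarrow> nat \<Rightarrow> (nat \<Rightarrow> nat \<Rightarrow> complex) \<Rightarrow> real" where
  "alpha_size m n a = Max {cmod (a j k) | j k. j \<in> {1..m} \<and> k \<in> {1..n}}"

definition c_hji :: "(nat \<Rightarrow> nat \<Rightarrow> complex) \<Rightarrow> nat \<Rightarrow> nat \<Rightarrow> nat \<Rightarrow> real" where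
  "c_hji a h j i = cmod (a h j - a h i) / 2"

definition c_hi :: "nat \<Rightarrow> (nat \<Rightarrow> complex \<Rightarrow> complex) \<Rightarrow> complex \<Rightarrow> (nat \<Rightarrow> nat \<Rightarrow> complex)
     \<Rightarrow> nat \<Rightarrow> nat \<Rightarrow> real" where
  "c_hi n \<sigma> \<mu> a h i = cmod (\<sigma> h \<mu>) / (\<Prod>j\<in>{1..n} - {i}. c_hji a h j i)"

definition S_mat :: "(nat \<Rightarrow> complex \<Rightarrow> complex) \<Rightarrow> (nat \<Rightarrow> complex) \<Rightarrow> nat \<Rightarrow> nat \<Rightarrow> complex" where
  "S_mat \<sigma> \<omega> j k = \<sigma> j (\<omega> k)"

definition mat_inverse :: "nat \<Rightarrow> (nat \<Rightarrow> nat \<Rightarrow> complex) \<Rightarrow> nat \<Rightarrow> nat \<Rightarrow> complex" where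
  "mat_inverse m S = (THE T. (\<forall>r\<in>{1..m}. \<forall>c\<in>{1..m}.
        (\<Sum>k=1..m. T r k * S k c) = (if r = c then 1 else 0)) \<and>
      (\<forall>r c. r \<notin> {1..m} \<or> c \<notin> {1..m} \<longrightarrow> T r c = 0))"

definition row_norm :: "nat \<Rightarrow> (nat \<Rightarrow> nat \<Rightarrow> complex) \<Rightarrow> real" where
  "row_norm m T = Max ((\<lambda>r. \<Sum>k=1..m. cmod (T r k)) ` {1..m})"

definition c_2 :: "nat \<Rightarrow> (nat \<Rightarrow> complex \<Rightarrow> complex) \<Rightarrow> (nat \<Rightarrow> complex) \<Rightarrow> real" where
  "c_2 m \<sigma> \<omega> = row_norm m (mat_inverse m (S_mat \<sigma> \<omega>))"

definition c_5 :: "nat \<Rightarrow> nat \<Rightarrow> (nat \<Rightarrow> complex \<Rightarrow> complex) \<Rightarrow> (nat \<Rightarrow> complex)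
     \<Rightarrow> (nat \<Rightarrow> nat \<Rightarrow> complex) \<Rightarrow> real" where
  "c_5 m n \<sigma> \<omega> a = 2 * c_2 m \<sigma> \<omega> * alpha_size m n a"

definition d_hi :: "nat \<Rightarrow> nat \<Rightarrow> (nat \<Rightarrow> complex \<Rightarrow> complex) \<Rightarrow> (nat \<Rightarrow> complex) \<Rightarrow> complex
     \<Rightarrow> (nat \<Rightarrow> nat \<Rightarrow> complex) \<Rightarrow> nat \<Rightarrow> nat \<Rightarrow> real" where
  "d_hi m n \<sigma> \<omega> \<mu> a h i = c_hi n \<sigma> \<mu> a h i * c_5 m n \<sigma> \<omega> a ^ (n - 1)"

definition vinner :: "nat \<Rightarrow> (nat \<Rightarrow> real) \<Rightarrow> (nat \<Rightarrow> real) \<Rightarrow> real" where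
  "vinner N u v = (\<Sum>t=1..N. u t * v t)"

definition vnorm :: "nat \<Rightarrow> (nat \<Rightarrow> real) \<Rightarrow> real" where
  "vnorm N u = sqrt (vinner N u u)"

definition lattice_gen :: "nat \<Rightarrow> (nat \<Rightarrow> nat \<Rightarrow> real) \<Rightarrow> (nat \<Rightarrow> real) set" where
  "lattice_gen k g = {(\<lambda>t. \<Sum>s=1..k. of_int (z s) * g s t) | z :: nat \<Rightarrow> int. True}"

definition lattice_basis :: "(nat \<Rightarrow> real) set \<Rightarrow> nat \<Rightarrow> (nat \<Rightarrow> nat \<Rightarrow> real) \<Rightarrow> bool" where
  "lattice_basis L k b \<longleftrightarrow> lattice_gen k b = L \<and>
     (\<forall>z :: nat \<Rightarrow> int. (\<forall>t. (\<Sum>s=1..k. of_int (z s) * b s t) = 0) \<longrightarrow> (\<forall>s\<in>{1..k}. z s = 0))"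

text \<open>LLL-reduced (parameter 3/4): bs is the Gram--Schmidt orthogonalisation of b with
  coefficients mu, which are size-reduced, and the Lovasz condition holds.\<close>
definition LLL_reduced :: "nat \<Rightarrow> nat \<Rightarrow> (nat \<Rightarrow> nat \<Rightarrow> real) \<Rightarrow> bool" where
  "LLL_reduced N k b \<longleftrightarrow> (\<exists>bs :: nat \<Rightarrow> nat \<Rightarrow> real. \<exists>mu :: nat \<Rightarrow> nat \<Rightarrow> real.
     (\<forall>i\<in>{1..k}. \<forall>t. b i t = bs i t + (\<Sum>j\<in>{1..<i}. mu i j * bs j t)) \<and>
     (\<forall>i\<in>{1..k}. \<forall>j\<in>{1..<i}. vinner N (bs i) (bs j) = 0) \<and>
     (\<forall>i\<in>{1..k}. \<forall>j\<in>{1..<i}. \<bar>mu i j\<bar> \<le> 1/2) \<and>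
     (\<forall>i\<in>{2..k}. vinner N (\<lambda>t. bs i t + mu i (i - 1) * bs (i - 1) t)
                               (\<lambda>t. bs i t + mu i (i - 1) * bs (i - 1) t)
                  \<ge> 3/4 * vinner N (bs (i - 1)) (bs (i - 1))))"

text \<open>The 2m generators (columns) of the lattice L in R^(2m+2) for fixed h, i, H.\<close>
definition gen_col :: "nat \<Rightarrow> (nat \<Rightarrow> complex \<Rightarrow> complex) \<Rightarrow> (nat \<Rightarrow> complex)
     \<Rightarrow> (nat \<Rightarrow> nat \<Rightarrow> complex) \<Rightarrow> nat \<Rightarrow> nat \<Rightarrow> real \<Rightarrow> nat \<Rightarrow> nat \<Rightarrow> real" where
  "gen_col m \<sigma> \<omega> a h i H s t =
     (let e = (if s \<le> m then \<sigma> h (\<omega> s) else a h i * \<sigma> h (\<omega> (s - m))) in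
      if t \<in> {1..2*m} then (if t = s then 1 else 0)
      else if t = 2*m + 1 then H * Re e
      else if t = 2*m + 2 then H * Im e
      else 0)"

end

theory Submission
  imports Defs
begin

text \<open>The integer vector (x, -y) gives the lattice vector v whose first 2m coordinates are
  those of (x, -y) and whose last two are H times the real and imaginary parts of the linear
  form L in the hypothesis, so |v|^2 <= 2m A^2 + H^2 |L|^2. LLL reduction gives
  |b_1|^2 <= 2^(2m-1) |v|^2: the Lovasz condition at most halves consecutive Gram--Schmidt
  norms, and v is at least as long as the Gram--Schmidt vector belonging to its last nonzero
  coefficient. The lower bound on |b_1| and A <= A0 then force A0 <= H |L|, and the
  approximation hypothesis |L| <= d A^(1-n) yields the claim.\<close>

lemma vinner_commute: "vinner N u v = vinner N v u"
  unfolding vinner_def by (simp add: mult.commute)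

lemma vinner_sum_left:
  "vinner N (\<lambda>t. \<Sum>j\<in>J. c j * u j t) w = (\<Sum>j\<in>J. c j * vinner N (u j) w)"
  unfolding vinner_def by (simp add: sum_distrib_left sum_distrib_right mult.assoc sum.swap[of _ J])

lemma vinner_add_left: "vinner N (\<lambda>t. u t + v t) w = vinner N u w + vinner N v w"
  unfolding vinner_def by (simp add: distrib_right sum.distrib)

lemma vinner_self_nonneg: "0 \<le> vinner N u u"
  unfolding vinner_def by (simp add: sum_nonneg)

lemma vinner_add_scaled_self:
  "vinner N (\<lambda>t. v t + c * u t) (\<lambda>t. v t + c * u t)
     = vinner N v v + 2 * c * vinner N v u + c\<^sup>2 * vinner N u u"
  unfolding vinner_def
  by (simp add: power2_eq_square algebra_simps sum.distrib sum_distrib_left)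

lemma Lovasz_condition_halving:
  assumes orth: "vinner N u w = 0" and c: "\<bar>c\<bar> \<le> 1/2"
    and lovasz: "3/4 * vinner N w w \<le> vinner N (\<lambda>t. u t + c * w t) (\<lambda>t. u t + c * w t)"
  shows "1/2 * vinner N w w \<le> vinner N u u"
proof -
  have "c\<^sup>2 \<le> (1/2)\<^sup>2"
    using c by (metis abs_ge_zero power2_abs power_mono)
  hence "c\<^sup>2 * vinner N w w \<le> (1/2)\<^sup>2 * vinner N w w"
    using vinner_self_nonneg by (rule mult_right_mono)
  moreover have "vinner N (\<lambda>t. u t + c * w t) (\<lambda>t. u t + c * w t) = vinner N u u + c\<^sup>2 * vinner N w w"
    by (simp add: vinner_add_scaled_self orth)
  ultimately show ?thesis
    using lovasz by (simp add: power2_eq_square)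
qed

lemma power_half_le_of_halving:
  fixes q :: "nat \<Rightarrow> real"
  assumes step: "\<And>j. j \<in> {2..k} \<Longrightarrow> 1/2 * q (j - 1) \<le> q j"
  shows "i \<in> {1..k} \<Longrightarrow> (1/2)^(i - 1) * q 1 \<le> q i"
proof (induction i)
  case (Suc i)
  show ?case
  proof (cases "i = 0")
    case False
    have "(1/2)^(Suc i - 1) * q 1 = 1/2 * ((1/2)^(i - 1) * q 1)"
      using False by (cases i) auto
    also have "\<dots> \<le> 1/2 * q i"
      using Suc False by simp
    also have "\<dots> \<le> q (Suc i)"
      using step[of "Suc i"] Suc.prems False by simp
    finally show ?thesis .
  qed simp
qed simp

lemma vinner_self_le_if_projection:
  assumes proj: "vinner N v w = c * vinner N w w" and c: "1 \<le> \<bar>c\<bar>"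
  shows "vinner N w w \<le> vinner N v v"
proof -
  have "0 \<le> vinner N v v + 2 * (- c) * vinner N v w + (- c)\<^sup>2 * vinner N w w"
    using vinner_add_scaled_self[of N v "- c" w] vinner_self_nonneg by metis
  hence "c\<^sup>2 * vinner N w w \<le> vinner N v v"
    by (simp add: proj power2_eq_square)
  moreover have "1 \<le> c\<^sup>2"
    using c by (metis abs_ge_zero one_le_power power2_abs)
  hence "1 * vinner N w w \<le> c\<^sup>2 * vinner N w w"
    using vinner_self_nonneg by (rule mult_right_mono)
  ultimately show ?thesis by simp
qed

lemma vinner_combination_gso:
  fixes k J :: nat
  assumes decomp: "\<forall>i\<in>{1..k}. \<forall>t. b i t = bs i t + (\<Sum>j\<in>{1..<i}. mu i j * bs j t)"
    and orth: "\<forall>i\<in>{1..k}. \<forall>j\<in>{1..<i}. vinner N (bs i) (bs j) = 0"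
    and J: "J \<in> {1..k}" and beyond: "\<forall>s\<in>{1..k}. J < s \<longrightarrow> z s = 0"
  shows "vinner N (\<lambda>t. \<Sum>s=1..k. z s * b s t) (bs J) = z J * vinner N (bs J) (bs J)"
proof -
  have gso: "vinner N (b s) (bs J) = (if s = J then vinner N (bs J) (bs J) else 0)"
    if s: "s \<in> {1..J}" for s
  proof -
    have sk: "s \<in> {1..k}" using s J by auto
    have "b s = (\<lambda>t. bs s t + (\<Sum>j\<in>{1..<s}. mu s j * bs j t))"
      using decomp sk by auto
    hence "vinner N (b s) (bs J) = vinner N (bs s) (bs J) + (\<Sum>j\<in>{1..<s}. mu s j * vinner N (bs j) (bs J))"
      by (simp add: vinner_add_left vinner_sum_left)
    also have "(\<Sum>j\<in>{1..<s}. mu s j * vinner N (bs j) (bs J)) = 0"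
      using orth J s by (auto intro!: sum.neutral simp: vinner_commute[of N "bs _" "bs J"])
    also have "vinner N (bs s) (bs J) = (if s = J then vinner N (bs J) (bs J) else 0)"
      using orth J s sk vinner_commute[of N "bs s" "bs J"] by auto
    finally show ?thesis by simp
  qed
  have "vinner N (\<lambda>t. \<Sum>s=1..k. z s * b s t) (bs J) = (\<Sum>s=1..k. z s * vinner N (b s) (bs J))"
    by (rule vinner_sum_left)
  also have "\<dots> = (\<Sum>s=1..J. z s * vinner N (b s) (bs J))"
    using J beyond by (intro sum.mono_neutral_right) auto
  also have "\<dots> = (\<Sum>s=1..J. if s = J then z J * vinner N (bs J) (bs J) else 0)"
    by (rule sum.cong) (auto simp: gso)
  also have "\<dots> = z J * vinner N (bs J) (bs J)"
    using J by simp
  finally show ?thesis .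
qed

lemma LLL_reduced_first_vector_short:
  assumes lll: "LLL_reduced N k b" and v: "v \<in> lattice_gen k b" and "v t \<noteq> 0"
  shows "vinner N (b 1) (b 1) \<le> 2^(k - 1) * vinner N v v"
proof -
  obtain bs mu where
    decomp: "\<forall>i\<in>{1..k}. \<forall>t. b i t = bs i t + (\<Sum>j\<in>{1..<i}. mu i j * bs j t)" and
    orth: "\<forall>i\<in>{1..k}. \<forall>j\<in>{1..<i}. vinner N (bs i) (bs j) = 0" and
    reduced: "\<forall>i\<in>{1..k}. \<forall>j\<in>{1..<i}. \<bar>mu i j\<bar> \<le> 1/2" and
    lovasz: "\<forall>i\<in>{2..k}. vinner N (\<lambda>t. bs i t + mu i (i - 1) * bs (i - 1) t)
                               (\<lambda>t. bs i t + mu i (i - 1) * bs (i - 1) t)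
                  \<ge> 3/4 * vinner N (bs (i - 1)) (bs (i - 1))"
    using lll unfolding LLL_reduced_def by blast
  obtain z :: "nat \<Rightarrow> int" where z: "v = (\<lambda>t. \<Sum>s=1..k. of_int (z s) * b s t)"
    using v unfolding lattice_gen_def by blast
  define S where "S = {s\<in>{1..k}. z s \<noteq> 0}"
  have "S \<noteq> {}"
    using \<open>v t \<noteq> 0\<close> unfolding z S_def by (auto intro!: sum.neutral)
  moreover have "finite S"
    by (simp add: S_def)
  ultimately have "Max S \<in> S" and "\<forall>s\<in>S. s \<le> Max S"
    by simp_all
  then obtain J where J: "J \<in> {1..k}" "z J \<noteq> 0" and beyond: "\<forall>s\<in>{1..k}. J < s \<longrightarrow> z s = 0"
    unfolding S_def by (metis (mono_tags, lifting) mem_Collect_eq not_le)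
  have halving: "1/2 * vinner N (bs (j - 1)) (bs (j - 1)) \<le> vinner N (bs j) (bs j)"
    if j: "j \<in> {2..k}" for j
  proof (rule Lovasz_condition_halving)
    show "vinner N (bs j) (bs (j - 1)) = 0"
      using orth j by auto
    show "\<bar>mu j (j - 1)\<bar> \<le> 1/2"
      using reduced j by auto
  qed (use lovasz j in auto)
  have b1: "b 1 = bs 1"
    using decomp J by (auto simp: fun_eq_iff)
  have "(1/2::real)^(k - 1) * vinner N (b 1) (b 1) \<le> (1/2)^(J - 1) * vinner N (b 1) (b 1)"
    using J by (intro mult_right_mono power_decreasing vinner_self_nonneg) auto
  also have "\<dots> \<le> vinner N (bs J) (bs J)"
    using power_half_le_of_halving[where q = "\<lambda>j. vinner N (bs j) (bs j)", OF halving J(1)] b1 by simp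
  also have "\<dots> \<le> vinner N v v"
    using vinner_combination_gso[OF decomp orth J(1), of "\<lambda>s. of_int (z s)"] beyond J(2) z
    by (intro vinner_self_le_if_projection[where c = "of_int (z J)"]) auto
  finally show ?thesis
    by (simp add: power_one_over field_simps)
qed

definition max_abs_pair :: "nat \<Rightarrow> (nat \<Rightarrow> int) \<Rightarrow> (nat \<Rightarrow> int) \<Rightarrow> int" where
  "max_abs_pair m x y = max (Max ((\<lambda>k. \<bar>x k\<bar>) ` {1..m})) (Max ((\<lambda>k. \<bar>y k\<bar>) ` {1..m}))"

lemma abs_le_max_abs_pair:
  assumes "k \<in> {1..m}"
  shows "\<bar>x k\<bar> \<le> max_abs_pair m x y" and "\<bar>y k\<bar> \<le> max_abs_pair m x y"
proof -
  have "\<bar>x k\<bar> \<le> Max ((\<lambda>k. \<bar>x k\<bar>) ` {1..m})" and "\<bar>y k\<bar> \<le> Max ((\<lambda>k. \<bar>y k\<bar>) ` {1..m})"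
    using assms by (simp_all add: Max_ge)
  then show "\<bar>x k\<bar> \<le> max_abs_pair m x y" and "\<bar>y k\<bar> \<le> max_abs_pair m x y"
    unfolding max_abs_pair_def by linarith+
qed

lemma max_abs_pair_ge_1:
  assumes "\<exists>k\<in>{1..m}. x k \<noteq> 0 \<or> y k \<noteq> 0"
  shows "1 \<le> max_abs_pair m x y"
proof -
  obtain k where k: "k \<in> {1..m}" and "x k \<noteq> 0 \<or> y k \<noteq> 0"
    using assms by blast
  with abs_le_max_abs_pair[OF k, where x = x and y = y] show ?thesis
    by linarith
qed

definition gen_entry :: "nat \<Rightarrow> (nat \<Rightarrow> complex \<Rightarrow> complex) \<Rightarrow> (nat \<Rightarrow> complex)
     \<Rightarrow> (nat \<Rightarrow> nat \<Rightarrow> complex) \<Rightarrow> nat \<Rightarrow> nat \<Rightarrow> nat \<Rightarrow> complex" where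
  "gen_entry m \<sigma> \<omega> a h i s = (if s \<le> m then \<sigma> h (\<omega> s) else a h i * \<sigma> h (\<omega> (s - m)))"

lemma gen_col_combination_coordinate:
  assumes "t \<in> {1..2*m}"
  shows "(\<Sum>s=1..2*m. w s * gen_col m \<sigma> \<omega> a h i H s t) = w t"
proof -
  have "(\<Sum>s=1..2*m. w s * gen_col m \<sigma> \<omega> a h i H s t) = (\<Sum>s=1..2*m. if s = t then w s else 0)"
    using assms by (intro sum.cong) (auto simp: gen_col_def Let_def)
  with assms show ?thesis
    by simp
qed

lemma gen_col_combination_last_rows:
  "(\<Sum>s=1..2*m. w s * gen_col m \<sigma> \<omega> a h i H s (2*m+1))
     = H * Re (\<Sum>s=1..2*m. of_real (w s) * gen_entry m \<sigma> \<omega> a h i s)"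
  "(\<Sum>s=1..2*m. w s * gen_col m \<sigma> \<omega> a h i H s (2*m+2))
     = H * Im (\<Sum>s=1..2*m. of_real (w s) * gen_entry m \<sigma> \<omega> a h i s)"
  by (auto simp: gen_col_def gen_entry_def Let_def sum_distrib_left Re_sum Im_sum intro!: sum.cong)

lemma gen_col_combination_sq_norm:
  assumes v_def: "v = (\<lambda>t. \<Sum>s=1..2*m. w s * gen_col m \<sigma> \<omega> a h i H s t)"
  shows "vinner (2*m+2) v v
           = (\<Sum>t=1..2*m. (w t)\<^sup>2) + (H * cmod (\<Sum>s=1..2*m. of_real (w s) * gen_entry m \<sigma> \<omega> a h i s))\<^sup>2"
    (is "_ = _ + (H * cmod ?S)\<^sup>2")
proof -
  have "vinner (2*m+2) v v = (\<Sum>t=1..2*m. (v t)\<^sup>2) + ((v (2*m+1))\<^sup>2 + (v (2*m+2))\<^sup>2)"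
    by (simp add: vinner_def power2_eq_square)
  also have "(\<Sum>t=1..2*m. (v t)\<^sup>2) = (\<Sum>t=1..2*m. (w t)\<^sup>2)"
    using gen_col_combination_coordinate unfolding v_def by (intro sum.cong) presburger+
  also have "(v (2*m+1))\<^sup>2 + (v (2*m+2))\<^sup>2 = (H * Re ?S)\<^sup>2 + (H * Im ?S)\<^sup>2"
    unfolding v_def gen_col_combination_last_rows ..
  also have "\<dots> = (H * cmod ?S)\<^sup>2"
    by (simp add: cmod_power2 power_mult_distrib distrib_left)
  finally show ?thesis
    by simp
qed

lemma gen_entry_stacked_sum:
  "(\<Sum>s=1..2*m. of_int (if s \<le> m then x s else - y (s - m)) * gen_entry m \<sigma> \<omega> a h i s)
     = (\<Sum>k=1..m. \<sigma> h (\<omega> k) * of_int (x k)) - (\<Sum>k=1..m. a h i * \<sigma> h (\<omega> k) * of_int (y k))"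
    (is "(\<Sum>s=1..2*m. ?f s) = ?X - ?Y")
proof -
  have "{1..2*m} = {1..m} \<union> {m+1..m+m}"
    by auto
  hence "(\<Sum>s=1..2*m. ?f s) = (\<Sum>s=1..m. ?f s) + (\<Sum>s=m+1..m+m. ?f s)"
    by (simp add: sum.union_disjoint)
  also have "(\<Sum>s=1..m. ?f s) = ?X"
    by (intro sum.cong) (auto simp: gen_entry_def)
  also have "(\<Sum>s=m+1..m+m. ?f s) = (\<Sum>k=1..m. ?f (k + m))"
    using sum.shift_bounds_cl_nat_ivl[of ?f 1 m m] by (simp add: add.commute)
  also have "\<dots> = - ?Y"
    by (simp add: gen_entry_def sum_negf[symmetric] mult_ac)
  finally show ?thesis
    by simp
qed

lemma stacked_sum_sq_le:
  "(\<Sum>t=1..2*m. (real_of_int (if t \<le> m then x t else - y (t - m)))\<^sup>2)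
     \<le> 2 * real m * (real_of_int (max_abs_pair m x y))\<^sup>2"
proof -
  have "\<bar>if t \<le> m then x t else - y (t - m)\<bar> \<le> max_abs_pair m x y" if t: "t \<in> {1..2*m}" for t
  proof (cases "t \<le> m")
    case True
    with t show ?thesis
      using abs_le_max_abs_pair(1) by simp
  next
    case False
    with t have "t - m \<in> {1..m}"
      by auto
    with False show ?thesis
      using abs_le_max_abs_pair(2) by simp
  qed
  hence "(\<Sum>t=1..2*m. (real_of_int (if t \<le> m then x t else - y (t - m)))\<^sup>2)
      \<le> (\<Sum>t=1..2*m. (real_of_int (max_abs_pair m x y))\<^sup>2)"
    by (intro sum_mono) (metis abs_ge_zero of_int_abs of_int_le_iff power2_abs power_mono)
  then show ?thesis
    by simp
qed

lemma gen_col_lattice_vector_of_pair: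
  assumes nz: "\<exists>k\<in>{1..m}. x k \<noteq> 0 \<or> y k \<noteq> 0"
  obtains v t where "v \<in> lattice_gen (2*m) (gen_col m \<sigma> \<omega> a h i H)" and "v t \<noteq> 0"
    and "vinner (2*m+2) v v \<le> 2 * real m * (real_of_int (max_abs_pair m x y))\<^sup>2
          + (H * cmod ((\<Sum>k=1..m. \<sigma> h (\<omega> k) * of_int (x k))
                      - (\<Sum>k=1..m. a h i * \<sigma> h (\<omega> k) * of_int (y k))))\<^sup>2"
proof -
  define z where "z s = (if s \<le> m then x s else - y (s - m))" for s
  define v where "v = (\<lambda>t. \<Sum>s=1..2*m. of_int (z s) * gen_col m \<sigma> \<omega> a h i H s t)"
  have "v \<in> lattice_gen (2*m) (gen_col m \<sigma> \<omega> a h i H)"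
    unfolding v_def lattice_gen_def by blast
  moreover obtain t where t: "t \<in> {1..2*m}" "z t \<noteq> 0"
  proof -
    obtain k where k: "k \<in> {1..m}" "x k \<noteq> 0 \<or> y k \<noteq> 0"
      using nz by blast
    show ?thesis
      using that[of k] that[of "k + m"] k by (cases "x k = 0") (auto simp: z_def)
  qed
  have "v t = of_int (z t)"
    unfolding v_def by (rule gen_col_combination_coordinate[OF t(1)])
  with t(2) have "v t \<noteq> 0"
    by simp
  moreover have "vinner (2*m+2) v v \<le> 2 * real m * (real_of_int (max_abs_pair m x y))\<^sup>2
          + (H * cmod ((\<Sum>k=1..m. \<sigma> h (\<omega> k) * of_int (x k))
                      - (\<Sum>k=1..m. a h i * \<sigma> h (\<omega> k) * of_int (y k))))\<^sup>2"
    using gen_col_combination_sq_norm[OF v_def] stacked_sum_sq_le[of m x y] gen_entry_stacked_sum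
    by (simp add: z_def)
  ultimately show ?thesis
    using that by blast
qed

lemma vinner_ge_of_vnorm_ge:
  assumes "sqrt C * r \<le> vnorm N u" and "0 \<le> C" and "0 \<le> r"
  shows "C * r\<^sup>2 \<le> vinner N u u"
proof -
  have "(sqrt C * r)\<^sup>2 \<le> (vnorm N u)\<^sup>2"
    using assms by (intro power_mono) auto
  then show ?thesis
    using assms(2) vinner_self_nonneg[of N u] by (simp add: vnorm_def power_mult_distrib)
qed

lemma le_of_sq_le_weighted:
  fixes A A0 l :: real
  assumes "(2 * real m + 1) * A0\<^sup>2 \<le> 2 * real m * A\<^sup>2 + l\<^sup>2"
    and "0 \<le> A" and "A \<le> A0" and "0 \<le> l"
  shows "A0 \<le> l"
proof -
  have "A\<^sup>2 \<le> A0\<^sup>2"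
    using assms by (intro power_mono) auto
  hence "2 * real m * A\<^sup>2 \<le> 2 * real m * A0\<^sup>2"
    by (intro mult_left_mono) auto
  with assms(1) have "A0\<^sup>2 \<le> l\<^sup>2"
    by (simp add: algebra_simps)
  with assms(4) show ?thesis
    using power2_le_imp_le by blast
qed

lemma le_powr_of_le_mult_powr:
  fixes A A0 c r :: real
  assumes bound: "A0 \<le> c * A powr (1 - r)" and A: "0 < A" and A0: "0 < A0" and r: "1 < r"
  shows "A \<le> (c / A0) powr (1 / (r - 1))"
proof -
  have "A0 * A powr (r - 1) \<le> c * (A powr (1 - r) * A powr (r - 1))"
    using mult_right_mono[OF bound, of "A powr (r - 1)"] by (simp add: mult.assoc)
  also have "A powr (1 - r) * A powr (r - 1) = 1"
    using A by (simp add: powr_add[symmetric])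
  finally have "A powr (r - 1) \<le> c / A0"
    using A0 by (simp add: field_simps)
  hence "(A powr (r - 1)) powr (1 / (r - 1)) \<le> (c / A0) powr (1 / (r - 1))"
    using r by (intro powr_mono2) auto
  then show ?thesis
    using A r by (simp add: powr_powr)
qed

theorem theorem3:
  fixes M :: "complex set" and m n h i :: nat
    and \<omega> :: "nat \<Rightarrow> complex" and \<sigma> :: "nat \<Rightarrow> complex \<Rightarrow> complex"
    and \<alpha> \<mu> :: complex and f :: "complex poly" and a :: "nat \<Rightarrow> nat \<Rightarrow> complex"
    and H A0 :: real and b :: "nat \<Rightarrow> nat \<Rightarrow> real" and x y :: "nat \<Rightarrow> int"
  assumes field: "subfield_C M"
    and deg: "Q_basis M m \<omega>"
    and intbasis: "integral_basis M m \<omega>"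
    and om1: "\<omega> 1 = 1"
    and emb: "embeddings M m \<sigma>"
    and alg: "algebraic_int \<alpha>"
    and minpoly: "rel_min_poly M \<alpha> f n"
    and conj: "conjugates m n \<sigma> f a"
    and n2: "n \<ge> 2"
    and mu: "\<mu> \<in> M" "algebraic_int \<mu>" "\<mu> \<noteq> 0"
    and hi: "h \<in> {1..m}" "i \<in> {1..n}"
    and Hpos: "H > 0"
    and basis: "lattice_basis (lattice_gen (2*m) (gen_col m \<sigma> \<omega> a h i H)) (2*m) b"
    and lll: "LLL_reduced (2*m+2) (2*m) b"
    and nz: "\<exists>k\<in>{1..m}. x k \<noteq> 0 \<or> y k \<noteq> 0"
    and approx: "cmod ((\<Sum>k=1..m. \<sigma> h (\<omega> k) * of_int (x k))
                   - (\<Sum>k=1..m. a h i * \<sigma> h (\<omega> k) * of_int (y k)))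
                 \<le> d_hi m n \<sigma> \<omega> \<mu> a h i *
                   real_of_int (max (Max ((\<lambda>k. \<bar>x k\<bar>) ` {1..m})) (Max ((\<lambda>k. \<bar>y k\<bar>) ` {1..m})))
                     powr (1 - real n)"
    and A0pos: "A0 > 0"
    and AleA0: "real_of_int (max (Max ((\<lambda>k. \<bar>x k\<bar>) ` {1..m})) (Max ((\<lambda>k. \<bar>y k\<bar>) ` {1..m}))) \<le> A0"
    and b1big: "vnorm (2*m+2) (b 1) \<ge> sqrt ((2*m+1) * 2^(2*m-1)) * A0"
  shows "real_of_int (max (Max ((\<lambda>k. \<bar>x k\<bar>) ` {1..m})) (Max ((\<lambda>k. \<bar>y k\<bar>) ` {1..m})))
           \<le> (d_hi m n \<sigma> \<omega> \<mu> a h i * H / A0) powr (1 / (real n - 1))"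
proof -
  define A where "A = real_of_int (max_abs_pair m x y)"
  define L where "L = (\<Sum>k=1..m. \<sigma> h (\<omega> k) * of_int (x k)) - (\<Sum>k=1..m. a h i * \<sigma> h (\<omega> k) * of_int (y k))"
  have A: "1 \<le> A" "A \<le> A0"
    using max_abs_pair_ge_1[OF nz] AleA0 by (simp_all add: A_def max_abs_pair_def)
  obtain v t where "v \<in> lattice_gen (2*m) (gen_col m \<sigma> \<omega> a h i H)" and "v t \<noteq> 0"
    and v_short: "vinner (2*m+2) v v \<le> 2 * real m * A\<^sup>2 + (H * cmod L)\<^sup>2"
    using gen_col_lattice_vector_of_pair[OF nz] unfolding A_def L_def by blast
  with basis have short: "vinner (2*m+2) (b 1) (b 1) \<le> 2^(2*m - 1) * vinner (2*m+2) v v"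
    unfolding lattice_basis_def by (intro LLL_reduced_first_vector_short[OF lll]) auto
  have "2^(2*m - 1) * ((2 * real m + 1) * A0\<^sup>2) = (2 * real m + 1) * 2^(2*m - 1) * A0\<^sup>2"
    by (simp add: mult_ac)
  also have "\<dots> \<le> vinner (2*m+2) (b 1) (b 1)"
    using vinner_ge_of_vnorm_ge[OF b1big] A0pos by (simp add: algebra_simps)
  also have "\<dots> \<le> 2^(2*m - 1) * (2 * real m * A\<^sup>2 + (H * cmod L)\<^sup>2)"
    by (rule order_trans[OF short mult_left_mono[OF v_short]]) simp
  finally have "(2 * real m + 1) * A0\<^sup>2 \<le> 2 * real m * A\<^sup>2 + (H * cmod L)\<^sup>2"
    by simp
  hence "A0 \<le> H * cmod L"
    by (rule le_of_sq_le_weighted) (use A Hpos in auto)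
  also have "\<dots> \<le> H * (d_hi m n \<sigma> \<omega> \<mu> a h i * A powr (1 - real n))"
    using approx Hpos unfolding A_def L_def max_abs_pair_def by (intro mult_left_mono) auto
  finally have "A0 \<le> d_hi m n \<sigma> \<omega> \<mu> a h i * H * A powr (1 - real n)"
    by (simp add: mult_ac)
  hence "A \<le> (d_hi m n \<sigma> \<omega> \<mu> a h i * H / A0) powr (1 / (real n - 1))"
    by (rule le_powr_of_le_mult_powr) (use A A0pos n2 in auto)
  then show ?thesis
    by (simp add: A_def max_abs_pair_def)
qed

end
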